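(* Let $a,b\in\mathbb{R}[\sin t,\cos t]$ be real trigonometric polynomials with $b$ having only simple zeroes, consider $x'=a(t)|x|+b(t)$, and let $u(t,x)$ denote its solution with $u(0,x)=x$. Let $I\subset(-\infty,0)$ be an open interval such that for every $x\in I$ the function $t\mapsto u(t,x)$ has exactly two zeroes in $(0,2\pi)$, both simple; denote them $t_1(x)<t_2(x)$. Then: \begin{enumerate} \item $t_1,t_2$ are analytic functions on $I$ with analytic inverses. \item For every $x\in I$: $b(t_1(x))>0$, $t_1'(x)<0$, $b(t_2(x))<0$, $t_2'(x)>0$. \item For every $x\in I$, \[ \int_{t_1(x)}^{t_2(x)} b(t)\exp\Big(\int_t^{t_2(x)}a(s)\,ds\Big)dt=0. \] \item For every $x\in I$, $u(t,x)$ is $2\pi$-periodic if and only if \[ \int_{t_2(x)}^{t_1(x)+2\pi} b(t)\exp\Big(\int_t^{t_1(x)+2\pi}-a(s)\,ds\Big)dt=0. \] \end{enumerate}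
   Context: A zero $t_0$ of $t\mapsto u(t,x)$ is simple if $\partial_t u(t_0,x)\neq 0$. *)

theory Defs
  imports "HOL-Analysis.Analysis"
begin

text \<open>Real trigonometric polynomials, i.e. elements of R[sin t, cos t] viewed as functions.\<close>
definition trig_poly :: "(real \<Rightarrow> real) \<Rightarrow> bool" where
  "trig_poly f \<longleftrightarrow> (\<exists>n c d. \<forall>t. f t =
      (\<Sum>k<n. c k * cos (real k * t) + d k * sin (real k * t)))"

definition real_analytic_on :: "(real \<Rightarrow> real) \<Rightarrow> real set \<Rightarrow> bool" where
  "real_analytic_on f S \<longleftrightarrow> (\<forall>x\<in>S. \<exists>r>0. \<exists>c::nat \<Rightarrow> real.
      \<forall>y. \<bar>y - x\<bar> < r \<longrightarrow> (\<lambda>n. c n * (y - x) ^ n) sums f y)"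

end

theory Submission
  imports Defs "HOL-Complex_Analysis.Complex_Analysis"
begin

(*
  Between consecutive zeros u has a fixed sign, so there the equation is linear, x' = a x + b or
  x' = - a x + b, and is integrated with the factor exp (- A) or exp A, where A' = a.  With
  F' = exp A * b and G' = exp (- A) * b this gives exp A * u = x + F on [0, t1 x] and
  exp (- A) * u = G - G (t1 x) on [t1 x, t2 x], hence F (t1 x) = - x and G (t2 x) = G (t1 x).
  Since u' = b at a zero of u and u crosses zero upwards at t1 x and downwards at t2 x, b is
  positive at t1 x and negative at t2 x.  The trigonometric polynomials a and b extend to entire
  functions, hence so do A, F and G; the two equations then determine t1 and t2 analytically by
  the holomorphic inverse function theorem, and differentiating them gives the signs of t1' and
  t2'.  The first integral equals exp (A (t2 x)) * (G (t2 x) - G (t1 x)) = 0, the second one is a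
  nonzero multiple of u (2 pi) x - x, and u (2 pi) x = x characterises periodic solutions because
  the equation is Lipschitz in x.
*)

section \<open>Real functions with local holomorphic extensions\<close>

definition real_holomorphic_at :: "(real \<Rightarrow> real) \<Rightarrow> real \<Rightarrow> bool" where
  "real_holomorphic_at f x \<longleftrightarrow> (\<exists>h S. open S \<and> complex_of_real x \<in> S \<and> h holomorphic_on S \<and>
      (\<forall>\<^sub>F y in nhds x. h (complex_of_real y) = complex_of_real (f y)))"

lemma real_holomorphic_atI:
  assumes "open S" "complex_of_real x \<in> S" "h holomorphic_on S"
    "\<forall>\<^sub>F y in nhds x. h (complex_of_real y) = complex_of_real (f y)"
  shows "real_holomorphic_at f x"
  using assms unfolding real_holomorphic_at_def by blast

lemma real_holomorphic_atE:
  assumes "real_holomorphic_at f x"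
  obtains h S where "open S" "complex_of_real x \<in> S" "h holomorphic_on S"
    "\<forall>\<^sub>F y in nhds x. h (complex_of_real y) = complex_of_real (f y)"
  using assms unfolding real_holomorphic_at_def by blast

lemma real_holomorphic_at_entire:
  assumes "h holomorphic_on UNIV" "\<And>t. h (complex_of_real t) = complex_of_real (f t)"
  shows "real_holomorphic_at f x"
  by (rule real_holomorphic_atI[OF open_UNIV UNIV_I assms(1)]) (simp add: assms(2))

lemma real_analytic_on_if_real_holomorphic_at:
  assumes "\<And>x. x \<in> S \<Longrightarrow> real_holomorphic_at f x"
  shows "real_analytic_on f S"
  unfolding real_analytic_on_def
proof
  fix x assume "x \<in> S"
  then obtain h U where U: "open U" "complex_of_real x \<in> U" "h holomorphic_on U"
    and ev: "\<forall>\<^sub>F y in nhds x. h (complex_of_real y) = complex_of_real (f y)"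
    by (rule real_holomorphic_atE[OF assms])
  obtain e where e: "e > 0" "\<And>y. dist y x < e \<Longrightarrow> h (complex_of_real y) = complex_of_real (f y)"
    using ev unfolding eventually_nhds_metric by blast
  obtain r where r: "r > 0" "ball (complex_of_real x) r \<subseteq> U"
    using U openE by blast
  define \<rho> where "\<rho> = min e r"
  have "ball (complex_of_real x) \<rho> \<subseteq> U"
    using r(2) by (auto simp: \<rho>_def)
  with U(3) have hol: "h holomorphic_on ball (complex_of_real x) \<rho>"
    by (rule holomorphic_on_subset)
  define c where "c n = Re ((deriv ^^ n) h (complex_of_real x) / fact n)" for n
  have "(\<lambda>n. c n * (y - x) ^ n) sums f y" if "\<bar>y - x\<bar> < \<rho>" for y
  proof -
    have "complex_of_real y \<in> ball (complex_of_real x) \<rho>"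
      using that by (simp add: dist_norm norm_minus_commute flip: of_real_diff)
    from holomorphic_power_series[OF hol this]
    have "(\<lambda>n. Re ((deriv ^^ n) h (complex_of_real x) / fact n * complex_of_real ((y - x) ^ n)))
            sums Re (h (complex_of_real y))"
      by (intro sums_Re) simp
    moreover have "Re (w * complex_of_real r) = Re w * r" for w r
      by simp
    ultimately have "(\<lambda>n. c n * (y - x) ^ n) sums Re (h (complex_of_real y))"
      unfolding c_def by (simp only:)
    moreover have "h (complex_of_real y) = complex_of_real (f y)"
      using e(2)[of y] that by (simp add: \<rho>_def dist_real_def)
    ultimately show ?thesis
      by simp
  qed
  moreover have "\<rho> > 0" using e r by (simp add: \<rho>_def)
  ultimately show "\<exists>r>0. \<exists>c. \<forall>y. \<bar>y - x\<bar> < r \<longrightarrow> (\<lambda>n. c n * (y - x) ^ n) sums f y"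
    by blast
qed

lemma has_real_derivative_Re_of_real:
  assumes "(h has_field_derivative D) (at (complex_of_real t))"
  shows "((\<lambda>s. Re (h (complex_of_real s))) has_real_derivative Re D) (at t)"
    and "((\<lambda>s. Im (h (complex_of_real s))) has_real_derivative Im D) (at t)"
  using has_vector_derivative_real_field[OF assms]
  by (auto dest: bounded_linear.has_vector_derivative[OF bounded_linear_Re]
      bounded_linear.has_vector_derivative[OF bounded_linear_Im]
      simp: has_real_derivative_iff_has_vector_derivative)

lemma real_holomorphic_at_has_real_derivative:
  assumes "open S" "complex_of_real x \<in> S" "h holomorphic_on S"
    and "\<forall>\<^sub>F y in nhds x. h (complex_of_real y) = complex_of_real (f y)"
  shows "(f has_real_derivative Re (deriv h (complex_of_real x))) (at x)"
proof -
  have "((\<lambda>y. Re (h (complex_of_real y))) has_real_derivative Re (deriv h (complex_of_real x)))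
      (at x)"
    using assms(1-3) by (intro has_real_derivative_Re_of_real holomorphic_derivI)
  moreover have "\<forall>\<^sub>F y in nhds x. Re (h (complex_of_real y)) = f y"
    using assms(4) by eventually_elim simp
  ultimately show ?thesis
    by (rule DERIV_cong_ev[OF refl _ refl, THEN iffD1, rotated])
qed

lemma real_holomorphic_at_differentiable:
  assumes "real_holomorphic_at f x"
  obtains D where "(f has_real_derivative D) (at x)"
  by (rule real_holomorphic_atE[OF assms]) (rule that[OF real_holomorphic_at_has_real_derivative])

lemma eventually_nhds_isCont:
  assumes "isCont f x" "\<forall>\<^sub>F y in nhds (f x). P y"
  shows "\<forall>\<^sub>F y in nhds x. P (f y)"
  using assms unfolding isCont_def tendsto_at_iff_tendsto_nhds
  by (rule eventually_compose_filterlim[rotated])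

lemma real_holomorphic_at_holomorphic_compose:
  assumes k: "real_holomorphic_at k x0"
    and g: "g holomorphic_on V" "open V" "complex_of_real (k x0) \<in> V"
    and ev: "\<forall>\<^sub>F x in nhds x0. g (complex_of_real (k x)) = complex_of_real (f x)"
  shows "real_holomorphic_at f x0"
proof -
  obtain hk S where S: "open S" "complex_of_real x0 \<in> S" "hk holomorphic_on S"
    and evk: "\<forall>\<^sub>F x in nhds x0. hk (complex_of_real x) = complex_of_real (k x)"
    using k by (rule real_holomorphic_atE)
  define T where "T = S \<inter> hk -` V"
  have "open T"
    unfolding T_def using holomorphic_on_imp_continuous_on[OF S(3)] S(1) g(2)
    by (rule continuous_open_preimage)
  moreover have "complex_of_real x0 \<in> T"
    using S(2) g(3) eventually_nhds_x_imp_x[OF evk] by (simp add: T_def)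
  moreover have "(g \<circ> hk) holomorphic_on T"
    by (rule holomorphic_on_compose_gen[OF holomorphic_on_subset[OF S(3)] g(1)]) (auto simp: T_def)
  moreover have "\<forall>\<^sub>F x in nhds x0. (g \<circ> hk) (complex_of_real x) = complex_of_real (f x)"
    using evk ev by eventually_elim simp
  ultimately show ?thesis
    by (rule real_holomorphic_atI)
qed

lemma real_holomorphic_at_compose:
  assumes g: "real_holomorphic_at g (k x0)" and k: "real_holomorphic_at k x0"
  shows "real_holomorphic_at (\<lambda>x. g (k x)) x0"
proof -
  obtain hg V where V: "open V" "complex_of_real (k x0) \<in> V" "hg holomorphic_on V"
    and evg: "\<forall>\<^sub>F y in nhds (k x0). hg (complex_of_real y) = complex_of_real (g y)"
    using g by (rule real_holomorphic_atE)
  obtain D where "(k has_real_derivative D) (at x0)"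
    using k by (rule real_holomorphic_at_differentiable)
  then have "\<forall>\<^sub>F x in nhds x0. hg (complex_of_real (k x)) = complex_of_real (g (k x))"
    using evg by (rule eventually_nhds_isCont[OF DERIV_isCont])
  with k V(3,1,2) show ?thesis
    by (rule real_holomorphic_at_holomorphic_compose)
qed

lemma holomorphic_local_inverse:
  assumes "h holomorphic_on S" "open S" "z0 \<in> S" "deriv h z0 \<noteq> 0"
  obtains r g where "r > 0" "open (h ` ball z0 r)" "g holomorphic_on h ` ball z0 r"
    "\<And>z. z \<in> ball z0 r \<Longrightarrow> g (h z) = z"
proof -
  obtain r where r: "r > 0" "ball z0 r \<subseteq> S" "inj_on h (ball z0 r)"
    using has_complex_derivative_locally_injective[OF assms(1,3,2,4)] by blast
  have hol: "h holomorphic_on ball z0 r"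
    using assms(1) r(2) by (rule holomorphic_on_subset)
  obtain g where g: "g holomorphic_on h ` ball z0 r" "\<And>z. z \<in> ball z0 r \<Longrightarrow> g (h z) = z"
    using holomorphic_has_inverse[OF hol open_ball r(3)] by blast
  have "open (h ` ball z0 r)"
    using open_mapping_thm3[OF hol open_ball r(3)] .
  with r(1) g show ?thesis
    by (intro that)
qed

lemma real_holomorphic_at_implicit:
  assumes \<Phi>: "real_holomorphic_at \<Phi> (f x0)" "(\<Phi> has_real_derivative D) (at (f x0))" "D \<noteq> 0"
    and k: "real_holomorphic_at k x0"
    and f: "isCont f x0"
    and ev: "\<forall>\<^sub>F x in nhds x0. \<Phi> (f x) = k x"
  shows "real_holomorphic_at f x0"
proof -
  \<comment> \<open>A local holomorphic inverse of the extension of \<Phi>, composed with the extension of k,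
    extends f.\<close>
  obtain h S where S: "open S" "complex_of_real (f x0) \<in> S" "h holomorphic_on S"
    and evh: "\<forall>\<^sub>F y in nhds (f x0). h (complex_of_real y) = complex_of_real (\<Phi> y)"
    using \<Phi>(1) by (rule real_holomorphic_atE)
  have "Re (deriv h (complex_of_real (f x0))) = D"
    using DERIV_unique[OF real_holomorphic_at_has_real_derivative[OF S evh] \<Phi>(2)] .
  with \<Phi>(3) have "deriv h (complex_of_real (f x0)) \<noteq> 0"
    by auto
  then obtain g r where r: "r > 0" "open (h ` ball (complex_of_real (f x0)) r)"
    and g: "g holomorphic_on h ` ball (complex_of_real (f x0)) r"
    "\<And>z. z \<in> ball (complex_of_real (f x0)) r \<Longrightarrow> g (h z) = z"
    using holomorphic_local_inverse[OF S(3,1,2)] by blast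
  have "complex_of_real (k x0) = h (complex_of_real (f x0))"
    using eventually_nhds_x_imp_x[OF ev] eventually_nhds_x_imp_x[OF evh] by simp
  with r(1) have k0: "complex_of_real (k x0) \<in> h ` ball (complex_of_real (f x0)) r"
    by auto
  have "\<forall>\<^sub>F x in nhds x0. f x \<in> ball (f x0) r"
    using r(1) by (intro eventually_nhds_isCont[OF f] eventually_nhds_in_open) auto
  moreover have "\<forall>\<^sub>F x in nhds x0. h (complex_of_real (f x)) = complex_of_real (\<Phi> (f x))"
    using eventually_nhds_isCont[OF f evh] .
  ultimately have "\<forall>\<^sub>F x in nhds x0. g (complex_of_real (k x)) = complex_of_real (f x)"
    using ev
  proof eventually_elim
    case (elim x)
    have "complex_of_real (f x) \<in> ball (complex_of_real (f x0)) r"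
      using elim(1) by (simp add: dist_norm flip: of_real_diff)
    then have "g (h (complex_of_real (f x))) = complex_of_real (f x)"
      by (rule g(2))
    with elim(2,3) show ?case
      by simp
  qed
  with k g(1) r(2) k0 show ?thesis
    by (rule real_holomorphic_at_holomorphic_compose)
qed

lemma real_holomorphic_at_inv_into:
  fixes f :: "real \<Rightarrow> real"
  assumes I: "open I" "inj_on f I"
    and hol: "\<And>x. x \<in> I \<Longrightarrow> real_holomorphic_at f x"
    and deriv: "\<And>x. x \<in> I \<Longrightarrow> \<exists>D. (f has_real_derivative D) (at x) \<and> D \<noteq> 0"
    and y: "y \<in> f ` I"
  shows "real_holomorphic_at (inv_into I f) y"
proof -
  have cont: "continuous_on I f"
    using deriv by (intro continuous_at_imp_continuous_on) (metis DERIV_isCont)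
  have "open (f ` I)"
    using invariance_of_domain[OF cont I] .
  moreover have "continuous_on (f ` I) (inv_into I f)"
    using I(2) by (intro continuous_on_inverse_open[OF I(1) cont]) auto
  ultimately have cont_inv: "isCont (inv_into I f) y"
    using y continuous_on_eq_continuous_at by blast
  have ev: "\<forall>\<^sub>F z in nhds y. f (inv_into I f z) = z"
    using eventually_nhds_in_open[OF \<open>open (f ` I)\<close> y] by eventually_elim (simp add: f_inv_into_f)
  have id: "real_holomorphic_at (\<lambda>z. z) y"
    by (rule real_holomorphic_at_entire[of "\<lambda>z. z"]) auto
  obtain x0 where x0: "x0 \<in> I" "inv_into I f y = x0"
    using y I(2) by auto
  obtain D where D: "(f has_real_derivative D) (at x0)" "D \<noteq> 0"
    using deriv[OF x0(1)] by blast
  show ?thesis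
    using real_holomorphic_at_implicit[OF _ _ D(2) id cont_inv ev] hol[OF x0(1)] D(1) x0(2) by simp
qed

section \<open>Entire extensions and trigonometric polynomials\<close>

definition has_entire_extension :: "(real \<Rightarrow> real) \<Rightarrow> bool" where
  "has_entire_extension f \<longleftrightarrow>
     (\<exists>h. h holomorphic_on UNIV \<and> (\<forall>t. h (complex_of_real t) = complex_of_real (f t)))"

lemma has_entire_extension_real_holomorphic_at:
  assumes "has_entire_extension f"
  shows "real_holomorphic_at f x"
  using assms real_holomorphic_at_entire unfolding has_entire_extension_def by blast

lemma has_entire_extension_isCont:
  assumes "has_entire_extension f"
  shows "isCont f x"
  using has_entire_extension_real_holomorphic_at[OF assms]
  by (rule real_holomorphic_at_differentiable) (rule DERIV_isCont)

lemma has_entire_extension_exp_mult: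
  assumes "has_entire_extension f" "has_entire_extension g"
  shows "has_entire_extension (\<lambda>t. exp (f t) * g t)"
proof -
  obtain hf hg where "hf holomorphic_on UNIV" "\<And>t. hf (complex_of_real t) = complex_of_real (f t)"
    "hg holomorphic_on UNIV" "\<And>t. hg (complex_of_real t) = complex_of_real (g t)"
    using assms unfolding has_entire_extension_def by blast
  then show ?thesis
    unfolding has_entire_extension_def
    by (intro exI[of _ "\<lambda>z. exp (hf z) * hg z"]) (auto intro!: holomorphic_intros simp: exp_of_real)
qed

lemma has_entire_extension_uminus:
  assumes "has_entire_extension f"
  shows "has_entire_extension (\<lambda>t. - f t)"
  using assms unfolding has_entire_extension_def
  by (metis holomorphic_on_minus of_real_minus)

lemma has_entire_extension_primitive:
  assumes "has_entire_extension q"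
  obtains R where "has_entire_extension R" "R 0 = 0" "\<And>t. (R has_real_derivative q t) (at t)"
proof -
  obtain h where h: "h holomorphic_on UNIV" "\<And>t. h (complex_of_real t) = complex_of_real (q t)"
    using assms unfolding has_entire_extension_def by blast
  obtain g where g: "\<And>z. (g has_field_derivative h z) (at z)"
    using holomorphic_convex_primitive'[OF convex_UNIV open_UNIV h(1)] by auto
  define P where "P z = g z - g 0" for z
  have P: "(P has_field_derivative h z) (at z)" for z
    unfolding P_def using g[of z] by (auto intro!: derivative_eq_intros)
  \<comment> \<open>P is real on the real axis because P 0 = 0 and its derivative h is real there.\<close>
  have "Im (P (complex_of_real t)) = Im (P (complex_of_real 0))" for t
    using has_real_derivative_Re_of_real(2)[OF P] h(2)
    by (intro DERIV_isconst_all[where f = "\<lambda>s. Im (P (complex_of_real s))"]) simp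
  then have real: "P (complex_of_real t) = complex_of_real (Re (P (complex_of_real t)))" for t
    by (simp add: P_def complex_eq_iff)
  have "P holomorphic_on UNIV"
    using P holomorphic_on_open[of UNIV P] by auto
  with real have "has_entire_extension (\<lambda>t. Re (P (complex_of_real t)))"
    unfolding has_entire_extension_def by metis
  moreover have "((\<lambda>s. Re (P (complex_of_real s))) has_real_derivative q t) (at t)" for t
    using has_real_derivative_Re_of_real(1)[OF P] h(2) by simp
  ultimately show ?thesis
    using that by (simp add: P_def)
qed

lemma trig_poly_has_entire_extension:
  assumes "trig_poly f"
  shows "has_entire_extension f"
proof -
  obtain n c d where f: "\<And>t. f t = (\<Sum>k<n. c k * cos (real k * t) + d k * sin (real k * t))"
    using assms unfolding trig_poly_def by blast
  define h where "h z = (\<Sum>k<n. complex_of_real (c k) * cos (of_nat k * z) +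
      complex_of_real (d k) * sin (of_nat k * z))" for z
  have "h holomorphic_on UNIV"
    unfolding h_def by (intro holomorphic_intros)
  moreover have "h (complex_of_real t) = complex_of_real (f t)" for t
    by (simp add: h_def f flip: cos_of_real sin_of_real)
  ultimately show ?thesis
    unfolding has_entire_extension_def by blast
qed

lemma trig_poly_periodic:
  assumes "trig_poly f"
  shows "f (t + 2 * pi) = f t"
proof -
  obtain n c d where f: "\<And>t. f t = (\<Sum>k<n. c k * cos (real k * t) + d k * sin (real k * t))"
    using assms unfolding trig_poly_def by blast
  have "cos (x + real k * (2 * pi)) = cos x" "sin (x + real k * (2 * pi)) = sin x" for x k
    using cos.plus_of_nat[of x k] sin.plus_of_nat[of x k] by simp_all
  then show ?thesis
    by (simp add: f distrib_left)
qed

lemma trig_poly_bounded: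
  assumes "trig_poly f"
  shows "\<exists>M. \<forall>t. \<bar>f t\<bar> \<le> M"
proof -
  obtain n c d where f: "\<And>t. f t = (\<Sum>k<n. c k * cos (real k * t) + d k * sin (real k * t))"
    using assms unfolding trig_poly_def by blast
  have "\<bar>f t\<bar> \<le> (\<Sum>k<n. \<bar>c k\<bar> + \<bar>d k\<bar>)" for t
  proof -
    have "\<bar>f t\<bar> \<le> (\<Sum>k<n. \<bar>c k * cos (real k * t)\<bar> + \<bar>d k * sin (real k * t)\<bar>)"
      unfolding f by (rule order_trans[OF sum_abs sum_mono]) (rule abs_triangle_ineq)
    also have "\<dots> \<le> (\<Sum>k<n. \<bar>c k\<bar> + \<bar>d k\<bar>)"
      by (intro sum_mono add_mono) (simp_all add: abs_mult mult_left_le)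
    finally show ?thesis .
  qed
  then show ?thesis
    by blast
qed

section \<open>Sign changes, level crossings and Gronwall's inequality\<close>

lemma continuous_on_connected_pos_iff:
  fixes U :: "real \<Rightarrow> real"
  assumes "connected S" "continuous_on S U" "\<And>t. t \<in> S \<Longrightarrow> U t \<noteq> 0" "s \<in> S" "t \<in> S"
  shows "U s > 0 \<longleftrightarrow> U t > 0"
proof -
  have "\<not> (U s > 0 \<and> U t < 0)" if "s \<in> S" "t \<in> S" for s t
  proof
    assume "U s > 0 \<and> U t < 0"
    moreover have "connected (U ` S)"
      using assms(2,1) by (rule connected_continuous_image)
    ultimately have "0 \<in> U ` S"
      using that connected_contains_Icc by fastforce
    with assms(3) show False
      by auto
  qed
  with assms(3-5) show ?thesis
    by (metis linorder_neqE_linordered_idom)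
qed

lemma sign_after_simple_zero:
  fixes U :: "real \<Rightarrow> real"
  assumes "(U has_real_derivative D) (at p)" "D \<noteq> 0" "U p = 0"
    and "continuous_on {p<..<q} U" "\<And>t. t \<in> {p<..<q} \<Longrightarrow> U t \<noteq> 0" "t \<in> {p<..<q}"
  shows "U t > 0 \<longleftrightarrow> D > 0"
proof -
  obtain d where d: "d > 0" "\<And>h. 0 < h \<Longrightarrow> h < d \<Longrightarrow> (U (p + h) > 0 \<longleftrightarrow> D > 0)"
  proof (cases "D > 0")
    case True
    with DERIV_pos_inc_right[OF assms(1)] assms(3) that show ?thesis
      by force
  next
    case False
    with assms(2) have "D < 0"
      by simp
    with DERIV_neg_dec_right[OF assms(1)] assms(3) that show ?thesis
      by force
  qed
  obtain h where h: "0 < h" "h < d" "h < q - p"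
    using field_lbound_gt_zero[OF d(1), of "q - p"] assms(6) by auto
  then have "U (p + h) > 0 \<longleftrightarrow> U t > 0"
    using assms(4-6) by (intro continuous_on_connected_pos_iff) auto
  with d(2)[OF h(1,2)] show ?thesis
    by simp
qed

lemma sign_before_simple_zero:
  fixes U :: "real \<Rightarrow> real"
  assumes "(U has_real_derivative D) (at q)" "D \<noteq> 0" "U q = 0"
    and "continuous_on {p<..<q} U" "\<And>t. t \<in> {p<..<q} \<Longrightarrow> U t \<noteq> 0" "t \<in> {p<..<q}"
  shows "U t > 0 \<longleftrightarrow> D < 0"
proof -
  obtain d where d: "d > 0" "\<And>h. 0 < h \<Longrightarrow> h < d \<Longrightarrow> (U (q - h) > 0 \<longleftrightarrow> D < 0)"
  proof (cases "D > 0")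
    case True
    with DERIV_pos_inc_left[OF assms(1)] assms(3) that show ?thesis
      by force
  next
    case False
    with assms(2) have "D < 0"
      by simp
    with DERIV_neg_dec_left[OF assms(1)] assms(3) that show ?thesis
      by force
  qed
  obtain h where h: "0 < h" "h < d" "h < q - p"
    using field_lbound_gt_zero[OF d(1), of "q - p"] assms(6) by auto
  then have "U (q - h) > 0 \<longleftrightarrow> U t > 0"
    using assms(4-6) by (intro continuous_on_connected_pos_iff) auto
  with d(2)[OF h(1,2)] show ?thesis
    by simp
qed

lemma first_crossing_eventually_less:
  fixes h c \<tau> :: "real \<Rightarrow> real"
  assumes c: "isCont c x0"
    and D: "(h has_real_derivative D) (at (\<tau> x0))" "D > 0"
    and ev: "\<forall>\<^sub>F x in nhds x0. l < \<tau> x \<and> h (\<tau> x) = c x \<and> (\<forall>t\<in>{l..<\<tau> x}. h t < c x)"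
    and "\<tau> x0 < p"
  shows "\<forall>\<^sub>F x in nhds x0. \<tau> x < p"
proof -
  have x0: "l < \<tau> x0" "h (\<tau> x0) = c x0"
    using eventually_nhds_x_imp_x[OF ev] by auto
  obtain d where d: "d > 0" "\<And>k. 0 < k \<Longrightarrow> k < d \<Longrightarrow> h (\<tau> x0) < h (\<tau> x0 + k)"
    using DERIV_pos_inc_right[OF D] by blast
  obtain k where k: "0 < k" "k < d" "k < p - \<tau> x0"
    using field_lbound_gt_zero[OF d(1), of "p - \<tau> x0"] \<open>\<tau> x0 < p\<close> by auto
  have "(c \<longlongrightarrow> c x0) (nhds x0)"
    using c by (simp add: isCont_def tendsto_at_iff_tendsto_nhds)
  moreover have "c x0 < h (\<tau> x0 + k)"
    using d(2)[OF k(1,2)] x0(2) by linarith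
  ultimately have "\<forall>\<^sub>F x in nhds x0. c x < h (\<tau> x0 + k)"
    by (rule order_tendstoD(2))
  with ev show ?thesis
  proof eventually_elim
    case (elim x)
    show ?case
    proof (rule ccontr)
      assume "\<not> \<tau> x < p"
      with k(3) consider "\<tau> x0 + k < \<tau> x" | "\<tau> x0 + k = \<tau> x"
        by linarith
      then show False
      proof cases
        case 1
        with x0(1) k(1) have "\<tau> x0 + k \<in> {l..<\<tau> x}"
          by auto
        with elim show False
          by fastforce
      qed (use elim in auto)
    qed
  qed
qed

lemma first_crossing_eventually_greater:
  fixes h c \<tau> :: "real \<Rightarrow> real"
  assumes h: "continuous_on UNIV h" and c: "isCont c x0"
    and ev: "\<forall>\<^sub>F x in nhds x0. l < \<tau> x \<and> h (\<tau> x) = c x \<and> (\<forall>t\<in>{l..<\<tau> x}. h t < c x)"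
    and "q < \<tau> x0"
  shows "\<forall>\<^sub>F x in nhds x0. q < \<tau> x"
proof (cases "q < l")
  case True
  from ev show ?thesis
    by (rule eventually_mono) (use True in auto)
next
  case False
  obtain m where m: "m \<in> {l..q}" "\<And>t. t \<in> {l..q} \<Longrightarrow> h t \<le> h m"
    using continuous_attains_sup[of "{l..q}" h] continuous_on_subset[OF h] False by auto
  have "h m < c x0"
    using eventually_nhds_x_imp_x[OF ev] m(1) \<open>q < \<tau> x0\<close> by auto
  moreover have "(c \<longlongrightarrow> c x0) (nhds x0)"
    using c by (simp add: isCont_def tendsto_at_iff_tendsto_nhds)
  ultimately have "\<forall>\<^sub>F x in nhds x0. h m < c x"
    by (rule order_tendstoD(1)[rotated])
  with ev show ?thesis
  proof eventually_elim
    case (elim x)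
    show ?case
    proof (rule ccontr)
      assume "\<not> q < \<tau> x"
      with elim have "\<tau> x \<in> {l..q}"
        by auto
      then have "h (\<tau> x) \<le> h m"
        by (rule m(2))
      with elim show False
        by linarith
    qed
  qed
qed

lemma isCont_first_crossing:
  fixes h c \<tau> :: "real \<Rightarrow> real"
  assumes "continuous_on UNIV h" "isCont c x0"
    and "(h has_real_derivative D) (at (\<tau> x0))" "D > 0"
    and "\<forall>\<^sub>F x in nhds x0. l < \<tau> x \<and> h (\<tau> x) = c x \<and> (\<forall>t\<in>{l..<\<tau> x}. h t < c x)"
  shows "isCont \<tau> x0"
proof -
  have "(\<tau> \<longlongrightarrow> \<tau> x0) (nhds x0)"
    using first_crossing_eventually_greater[OF assms(1,2,5)]
      first_crossing_eventually_less[OF assms(2-5)]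
    by (rule order_tendstoI)
  then show ?thesis
    by (simp add: isCont_def tendsto_at_iff_tendsto_nhds)
qed

lemma gronwall_zero_nonneg:
  fixes w w' :: "real \<Rightarrow> real"
  assumes w: "\<And>t. (w has_real_derivative w' t) (at t)"
    and bound: "\<And>t. \<bar>w' t\<bar> \<le> M * \<bar>w t\<bar>" and "w 0 = 0" "0 \<le> t"
  shows "w t = 0"
proof -
  define \<phi> where "\<phi> s = (w s)\<^sup>2 * exp (- 2 * M * s)" for s
  have "(\<phi> has_real_derivative 2 * (w s * w' s - M * (w s)\<^sup>2) * exp (- 2 * M * s)) (at s)" for s
    unfolding \<phi>_def by (auto intro!: derivative_eq_intros w simp: algebra_simps power2_eq_square)
  moreover have "2 * (w s * w' s - M * (w s)\<^sup>2) * exp (- 2 * M * s) \<le> 0" for s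
  proof -
    have "w s * w' s \<le> \<bar>w s\<bar> * \<bar>w' s\<bar>"
      by (metis abs_ge_self abs_mult)
    also have "\<dots> \<le> \<bar>w s\<bar> * (M * \<bar>w s\<bar>)"
      by (rule mult_left_mono[OF bound abs_ge_zero])
    also have "\<dots> = M * (w s)\<^sup>2"
      by (simp add: power2_eq_square abs_mult_self_eq)
    finally have nonpos: "w s * w' s - M * (w s)\<^sup>2 \<le> 0"
      by linarith
    show ?thesis
      by (rule mult_nonpos_nonneg[OF mult_nonneg_nonpos[OF _ nonpos]]) simp_all
  qed
  ultimately have "\<phi> t \<le> \<phi> 0"
    using DERIV_nonpos_imp_nonincreasing[OF \<open>0 \<le> t\<close>] by blast
  with \<open>w 0 = 0\<close> show ?thesis
    by (simp add: \<phi>_def mult_le_0_iff)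
qed

lemma gronwall_zero:
  fixes w w' :: "real \<Rightarrow> real"
  assumes w: "\<And>t. (w has_real_derivative w' t) (at t)"
    and bound: "\<And>t. \<bar>w' t\<bar> \<le> M * \<bar>w t\<bar>" and "w 0 = 0"
  shows "w t = 0"
proof (cases "0 \<le> t")
  case True
  with assms show ?thesis
    by (rule gronwall_zero_nonneg)
next
  case False
  have deriv: "((\<lambda>s. w (- s)) has_real_derivative - w' (- s)) (at s)" for s
    using DERIV_chain2[OF w DERIV_minus[OF DERIV_ident], of s] by simp
  have "\<bar>- w' (- s)\<bar> \<le> M * \<bar>w (- s)\<bar>" for s
    using bound[of "- s"] by simp
  then have "(\<lambda>s. w (- s)) (- t) = 0"
    by (rule gronwall_zero_nonneg[where w = "\<lambda>s. w (- s)" and w' = "\<lambda>s. - w' (- s)", OF deriv])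
      (use False \<open>w 0 = 0\<close> in auto)
  then show ?thesis
    by simp
qed

lemma integral_eq_primitive_diff:
  assumes "\<And>t. (F has_real_derivative f t) (at t)" "p \<le> q"
  shows "integral {p..q} f = F q - F p"
  using assms
  by (intro integral_unique fundamental_theorem_of_calculus)
     (auto simp: has_real_derivative_iff_has_vector_derivative has_vector_derivative_at_within)

lemma integral_exp_integral_weight:
  assumes A: "\<And>t. (A has_real_derivative a t) (at t)"
    and G: "\<And>t. (G has_real_derivative exp (- A t) * b t) (at t)" and "p \<le> q"
  shows "integral {p..q} (\<lambda>t. b t * exp (integral {t..q} a)) = exp (A q) * (G q - G p)"
proof -
  have "integral {p..q} (\<lambda>t. b t * exp (integral {t..q} a)) =
        integral {p..q} (\<lambda>t. exp (A q) * (exp (- A t) * b t))"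
    by (intro integral_cong)
      (simp add: integral_eq_primitive_diff[OF A] exp_diff exp_minus field_simps)
  also have "\<dots> = exp (A q) * (G q - G p)"
    using integral_eq_primitive_diff[OF DERIV_cmult[OF G] \<open>p \<le> q\<close>] by (simp add: right_diff_distrib)
  finally show ?thesis .
qed

section \<open>Solutions of x' = a t * abs x + b t with two zeros per period\<close>

locale abs_ode_two_zeros =
  fixes a b :: "real \<Rightarrow> real" and u :: "real \<Rightarrow> real \<Rightarrow> real" and I :: "real set"
    and t1 t2 :: "real \<Rightarrow> real" and A F G :: "real \<Rightarrow> real"
  assumes u_ode: "\<And>t x. ((\<lambda>s. u s x) has_real_derivative (a t * \<bar>u t x\<bar> + b t)) (at t)"
    and u_init: "\<And>x. u 0 x = x"
    and I_open: "open I" and I_interval: "is_interval I" and I_neg: "I \<subseteq> {..<0}"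
    and zeros: "\<And>x. x \<in> I \<Longrightarrow> 0 < t1 x \<and> t1 x < t2 x \<and> t2 x < 2 * pi \<and>
                 {t \<in> {0<..<2 * pi}. u t x = 0} = {t1 x, t2 x}"
    and simple: "\<And>x t. x \<in> I \<Longrightarrow> t \<in> {0<..<2 * pi} \<Longrightarrow> u t x = 0 \<Longrightarrow>
                 deriv (\<lambda>s. u s x) t \<noteq> 0"
    and a_periodic: "\<And>t. a (t + 2 * pi) = a t" and b_periodic: "\<And>t. b (t + 2 * pi) = b t"
    and a_bounded: "\<exists>M. \<forall>t. \<bar>a t\<bar> \<le> M" and b_cont: "\<And>t. isCont b t"
    and A_deriv: "\<And>t. (A has_real_derivative a t) (at t)" and A_0: "A 0 = 0"
    and F_deriv: "\<And>t. (F has_real_derivative exp (A t) * b t) (at t)" and F_0: "F 0 = 0"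
    and G_deriv: "\<And>t. (G has_real_derivative exp (- A t) * b t) (at t)"
    and F_entire: "has_entire_extension F" and G_entire: "has_entire_extension G"
begin

lemma zero_times:
  assumes "x \<in> I"
  shows "0 < t1 x" "t1 x < t2 x" "t2 x < 2 * pi" "u (t1 x) x = 0" "u (t2 x) x = 0"
  using zeros[OF assms] by (auto simp: set_eq_iff)

lemma u_ne_0:
  assumes "x \<in> I" "0 < t" "t < 2 * pi" "t \<noteq> t1 x" "t \<noteq> t2 x"
  shows "u t x \<noteq> 0"
  using zeros[OF assms(1)] assms(2-5) by (auto simp: set_eq_iff)

lemma u_continuous: "continuous_on S (\<lambda>s. u s x)"
  using u_ode by (intro continuous_at_imp_continuous_on ballI) (rule DERIV_isCont)

lemma u_deriv_at_zero:
  assumes "u t x = 0"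
  shows "((\<lambda>s. u s x) has_real_derivative b t) (at t)"
  using u_ode[of x t] assms by simp

lemma b_ne_0_at_zero:
  assumes "x \<in> I" "t \<in> {0<..<2 * pi}" "u t x = 0"
  shows "b t \<noteq> 0"
  using simple[OF assms] DERIV_imp_deriv[OF u_deriv_at_zero[OF assms(3)]] by simp

lemma u_neg_before_t1:
  assumes "x \<in> I" "t \<in> {0..<t1 x}"
  shows "u t x < 0"
proof -
  have nonzero: "u s x \<noteq> 0" if "s \<in> {0..<t1 x}" for s
    using that u_init[of x] I_neg assms(1) u_ne_0[OF assms(1), of s] zero_times[OF assms(1)]
    by (cases "s = 0") auto
  have "u 0 x > 0 \<longleftrightarrow> u t x > 0"
    using zero_times[OF assms(1)] assms(2) nonzero
    by (intro continuous_on_connected_pos_iff[where S = "{0..<t1 x}"] u_continuous) auto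
  with u_init[of x] I_neg assms(1) nonzero[OF assms(2)] show ?thesis
    by auto
qed

lemma b_t1_pos:
  assumes "x \<in> I"
  shows "b (t1 x) > 0"
proof -
  note z = zero_times[OF assms]
  have t: "t1 x / 2 \<in> {0<..<t1 x}"
    using z by simp
  have "u (t1 x / 2) x > 0 \<longleftrightarrow> b (t1 x) < 0"
    using z t assms
    by (intro sign_before_simple_zero[where p = 0, OF u_deriv_at_zero b_ne_0_at_zero]
        u_continuous u_ne_0) auto
  with u_neg_before_t1[OF assms, of "t1 x / 2"] t b_ne_0_at_zero[OF assms, of "t1 x"] z show ?thesis
    by fastforce
qed

lemma u_pos_between:
  assumes "x \<in> I" "t \<in> {t1 x<..<t2 x}"
  shows "u t x > 0"
proof -
  note z = zero_times[OF assms(1)]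
  have "u t x > 0 \<longleftrightarrow> b (t1 x) > 0"
    using z assms b_t1_pos[OF assms(1)]
    by (intro sign_after_simple_zero[where q = "t2 x", OF u_deriv_at_zero]
        u_continuous u_ne_0) auto
  with b_t1_pos[OF assms(1)] show ?thesis
    by simp
qed

lemma b_t2_neg:
  assumes "x \<in> I"
  shows "b (t2 x) < 0"
proof -
  note z = zero_times[OF assms]
  define t where "t = (t1 x + t2 x) / 2"
  have t: "t \<in> {t1 x<..<t2 x}"
    using z by (simp add: t_def)
  have "u t x > 0 \<longleftrightarrow> b (t2 x) < 0"
    using z t assms
    by (intro sign_before_simple_zero[where p = "t1 x", OF u_deriv_at_zero b_ne_0_at_zero]
        u_continuous u_ne_0) auto
  with u_pos_between[OF assms t] show ?thesis
    by simp
qed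

lemma u_neg_after_t2:
  assumes "x \<in> I" "t \<in> {t2 x<..<2 * pi}"
  shows "u t x < 0"
proof -
  note z = zero_times[OF assms(1)]
  have "u t x > 0 \<longleftrightarrow> b (t2 x) > 0"
    using z assms b_t2_neg[OF assms(1)]
    by (intro sign_after_simple_zero[where q = "2 * pi", OF u_deriv_at_zero]
        u_continuous u_ne_0) auto
  moreover have "u t x \<noteq> 0"
    using z assms by (intro u_ne_0) auto
  ultimately show ?thesis
    using b_t2_neg[OF assms(1)] by auto
qed

lemma integrating_factor_neg:
  assumes "p < q" "\<And>s. s \<in> {p<..<q} \<Longrightarrow> u s x < 0" "t \<in> {p..q}"
  shows "exp (A t) * u t x - F t = exp (A p) * u p x - F p"
proof -
  define \<Phi> where "\<Phi> s = exp (A s) * u s x - F s" for s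
  have \<Phi>': "(\<Phi> has_real_derivative
      exp (A s) * a s * u s x + (a s * \<bar>u s x\<bar> + b s) * exp (A s) - exp (A s) * b s) (at s)" for s
    unfolding \<Phi>_def by (rule DERIV_diff[OF DERIV_mult[OF DERIV_fun_exp[OF A_deriv] u_ode] F_deriv])
  have "\<Phi> t = \<Phi> p"
  proof (rule DERIV_isconst2[OF assms(1)])
    show "continuous_on {p..q} \<Phi>"
      using \<Phi>' by (intro continuous_at_imp_continuous_on ballI) (rule DERIV_isCont)
    show "(\<Phi> has_real_derivative 0) (at s)" if "p < s" "s < q" for s
      using \<Phi>'[of s] assms(2)[of s] that by (simp add: algebra_simps)
  qed (use assms(3) in auto)
  then show ?thesis
    by (simp add: \<Phi>_def)
qed

lemma integrating_factor_pos:
  assumes "p < q" "\<And>s. s \<in> {p<..<q} \<Longrightarrow> u s x > 0" "t \<in> {p..q}"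
  shows "exp (- A t) * u t x - G t = exp (- A p) * u p x - G p"
proof -
  define \<Phi> where "\<Phi> s = exp (- A s) * u s x - G s" for s
  have \<Phi>': "(\<Phi> has_real_derivative
      exp (- A s) * - a s * u s x + (a s * \<bar>u s x\<bar> + b s) * exp (- A s) - exp (- A s) * b s)
      (at s)" for s
    unfolding \<Phi>_def
    by (rule DERIV_diff[OF DERIV_mult[OF DERIV_fun_exp[OF DERIV_minus[OF A_deriv]] u_ode] G_deriv])
  have "\<Phi> t = \<Phi> p"
  proof (rule DERIV_isconst2[OF assms(1)])
    show "continuous_on {p..q} \<Phi>"
      using \<Phi>' by (intro continuous_at_imp_continuous_on ballI) (rule DERIV_isCont)
    show "(\<Phi> has_real_derivative 0) (at s)" if "p < s" "s < q" for s
      using \<Phi>'[of s] assms(2)[of s] that by (simp add: algebra_simps)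
  qed (use assms(3) in auto)
  then show ?thesis
    by (simp add: \<Phi>_def)
qed

lemma exp_A_u_before_t1:
  assumes "x \<in> I" "t \<in> {0..t1 x}"
  shows "exp (A t) * u t x = x + F t"
  using integrating_factor_neg[OF zero_times(1)[OF assms(1)] u_neg_before_t1[OF assms(1)] assms(2)]
  by (simp add: A_0 F_0 u_init)

lemma F_t1: "x \<in> I \<Longrightarrow> F (t1 x) = - x"
  using exp_A_u_before_t1[of x "t1 x"] zero_times[of x] by simp

lemma F_lt_before_t1:
  assumes "x \<in> I" "t \<in> {0..<t1 x}"
  shows "F t < - x"
proof -
  have "exp (A t) * u t x < 0"
    using u_neg_before_t1[OF assms] by (simp add: mult_pos_neg)
  with exp_A_u_before_t1[OF assms(1), of t] assms(2) show ?thesis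
    by simp
qed

lemma exp_A_u_between:
  assumes "x \<in> I" "t \<in> {t1 x..t2 x}"
  shows "exp (- A t) * u t x = G t - G (t1 x)"
  using integrating_factor_pos[OF zero_times(2)[OF assms(1)] u_pos_between[OF assms(1)] assms(2)]
    zero_times(4)[OF assms(1)] by simp

lemma G_t2: "x \<in> I \<Longrightarrow> G (t2 x) = G (t1 x)"
  using exp_A_u_between[of x "t2 x"] zero_times[of x] by simp

lemma G_gt_between:
  assumes "x \<in> I" "t \<in> {t1 x<..<t2 x}"
  shows "G (t1 x) < G t"
proof -
  have "exp (- A t) * u t x > 0"
    using u_pos_between[OF assms] by simp
  with exp_A_u_between[OF assms(1), of t] assms(2) show ?thesis
    by simp
qed

lemma F_t2: "x \<in> I \<Longrightarrow> exp (A (2 * pi)) * u (2 * pi) x - F (2 * pi) = - F (t2 x)"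
  using integrating_factor_neg[of "t2 x" "2 * pi" x "2 * pi"] zero_times[of x] u_neg_after_t2[of x]
  by simp

lemma F_continuous: "continuous_on S F"
  using F_deriv by (intro continuous_at_imp_continuous_on ballI) (rule DERIV_isCont)

lemma G_continuous: "continuous_on S G"
  using G_deriv by (intro continuous_at_imp_continuous_on ballI) (rule DERIV_isCont)

lemma t1_continuous:
  assumes "x0 \<in> I"
  shows "isCont t1 x0"
proof (rule isCont_first_crossing[OF F_continuous _ F_deriv])
  show "isCont uminus x0"
    by (intro continuous_intros)
  show "exp (A (t1 x0)) * b (t1 x0) > 0"
    using b_t1_pos[OF assms] by simp
  show "\<forall>\<^sub>F x in nhds x0. 0 < t1 x \<and> F (t1 x) = - x \<and> (\<forall>t\<in>{0..<t1 x}. F t < - x)"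
    using eventually_nhds_in_open[OF I_open assms]
    by eventually_elim (simp add: zero_times F_t1 F_lt_before_t1)
qed

lemma G_increasing_near_t1:
  assumes "x0 \<in> I"
  obtains \<delta> where "\<delta> > 0" "t1 x0 + \<delta> < t2 x0"
    "\<And>v w. t1 x0 - \<delta> \<le> v \<Longrightarrow> v < w \<Longrightarrow> w \<le> t1 x0 + \<delta> \<Longrightarrow> G v < G w"
proof -
  have "(b \<longlongrightarrow> b (t1 x0)) (nhds (t1 x0))"
    using b_cont by (simp add: isCont_def tendsto_at_iff_tendsto_nhds)
  then have "\<forall>\<^sub>F t in nhds (t1 x0). b t > 0"
    using b_t1_pos[OF assms] by (rule order_tendstoD(1))
  then obtain e where e: "e > 0" "\<And>t. dist t (t1 x0) < e \<Longrightarrow> b t > 0"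
    unfolding eventually_nhds_metric by blast
  define \<delta> where "\<delta> = min (e / 2) ((t2 x0 - t1 x0) / 2)"
  have "\<delta> > 0" "t1 x0 + \<delta> < t2 x0"
    using e(1) zero_times[OF assms] by (auto simp: \<delta>_def min_def field_simps)
  moreover have "G v < G w" if "t1 x0 - \<delta> \<le> v" "v < w" "w \<le> t1 x0 + \<delta>" for v w
  proof (rule DERIV_pos_imp_increasing[OF \<open>v < w\<close>])
    fix t assume "v \<le> t" "t \<le> w"
    with that e(2)[of t] have "exp (- A t) * b t > 0"
      by (simp add: \<delta>_def dist_real_def abs_le_iff)
    with G_deriv show "\<exists>y. (G has_real_derivative y) (at t) \<and> y > 0"
      by blast
  qed
  ultimately show ?thesis
    using that by blast
qed

lemma t2_continuous:
  assumes x0: "x0 \<in> I"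
  shows "isCont t2 x0"
proof -
  obtain \<delta> where \<delta>: "\<delta> > 0" "t1 x0 + \<delta> < t2 x0"
    and G_increasing: "\<And>v w. t1 x0 - \<delta> \<le> v \<Longrightarrow> v < w \<Longrightarrow> w \<le> t1 x0 + \<delta> \<Longrightarrow> G v < G w"
    using G_increasing_near_t1[OF x0] by blast
  have "(t1 \<longlongrightarrow> t1 x0) (nhds x0)"
    using t1_continuous[OF x0] by (simp add: isCont_def tendsto_at_iff_tendsto_nhds)
  then have "\<forall>\<^sub>F x in nhds x0. dist (t1 x) (t1 x0) < \<delta>"
    using \<delta>(1) by (rule tendstoD)
  with eventually_nhds_in_open[OF I_open x0]
  have "\<forall>\<^sub>F x in nhds x0. x \<in> I \<and> dist (t1 x) (t1 x0) < \<delta>"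
    by (rule eventually_conj)
  \<comment> \<open>As G increases near t1 x0, the level G (t1 x) is not reached again before t1 x0 + \<delta>.\<close>
  then have ev: "\<forall>\<^sub>F x in nhds x0. t1 x0 + \<delta> < t2 x \<and> - G (t2 x) = - G (t1 x) \<and>
      (\<forall>t\<in>{t1 x0 + \<delta>..<t2 x}. - G t < - G (t1 x))"
  proof eventually_elim
    case (elim x)
    then have near: "t1 x0 - \<delta> < t1 x" "t1 x < t1 x0 + \<delta>"
      by (auto simp: dist_real_def)
    have "t1 x0 + \<delta> < t2 x"
    proof (rule ccontr)
      assume "\<not> t1 x0 + \<delta> < t2 x"
      with zero_times(2)[of x] elim near have "G (t1 x) < G (t2 x)"
        by (intro G_increasing) auto
      with G_t2[of x] elim show False
        by simp
    qed
    with elim near show ?case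
      by (auto simp: G_t2 intro!: G_gt_between)
  qed
  have "isCont (\<lambda>x. - G (t1 x)) x0"
    using G_deriv
    by (intro continuous_intros isCont_o2[OF t1_continuous[OF x0]]) (rule DERIV_isCont)
  moreover have "continuous_on UNIV (\<lambda>t. - G t)"
    by (intro continuous_intros G_continuous)
  moreover have "- (exp (- A (t2 x0)) * b (t2 x0)) > 0"
    using b_t2_neg[OF x0] by (simp add: mult_pos_neg)
  ultimately show ?thesis
    using isCont_first_crossing[OF _ _ DERIV_minus[OF G_deriv] _ ev] by blast
qed

lemma t1_real_holomorphic:
  assumes "x0 \<in> I"
  shows "real_holomorphic_at t1 x0"
proof (rule real_holomorphic_at_implicit)
  show "real_holomorphic_at F (t1 x0)"
    using F_entire by (rule has_entire_extension_real_holomorphic_at)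
  show "exp (A (t1 x0)) * b (t1 x0) \<noteq> 0"
    using b_t1_pos[OF assms] by simp
  show "real_holomorphic_at uminus x0"
    by (rule real_holomorphic_at_entire[of uminus]) (auto intro: holomorphic_intros)
  show "\<forall>\<^sub>F x in nhds x0. F (t1 x) = - x"
    using eventually_nhds_in_open[OF I_open assms] by eventually_elim (rule F_t1)
qed (fact F_deriv t1_continuous[OF assms])+

lemma t2_real_holomorphic:
  assumes "x0 \<in> I"
  shows "real_holomorphic_at t2 x0"
proof (rule real_holomorphic_at_implicit)
  show "real_holomorphic_at G (t2 x0)"
    using G_entire by (rule has_entire_extension_real_holomorphic_at)
  show "exp (- A (t2 x0)) * b (t2 x0) \<noteq> 0"
    using b_t2_neg[OF assms] by simp
  show "real_holomorphic_at (\<lambda>x. G (t1 x)) x0"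
    using has_entire_extension_real_holomorphic_at[OF G_entire] t1_real_holomorphic[OF assms]
    by (rule real_holomorphic_at_compose)
  show "\<forall>\<^sub>F x in nhds x0. G (t2 x) = G (t1 x)"
    using eventually_nhds_in_open[OF I_open assms] by eventually_elim (rule G_t2)
qed (fact G_deriv t2_continuous[OF assms])+

lemma t1_deriv_neg:
  assumes "x0 \<in> I"
  shows "\<exists>D. (t1 has_real_derivative D) (at x0) \<and> D < 0"
proof -
  obtain D where D: "(t1 has_real_derivative D) (at x0)"
    using t1_real_holomorphic[OF assms] by (rule real_holomorphic_at_differentiable)
  have "((\<lambda>x. F (t1 x)) has_real_derivative exp (A (t1 x0)) * b (t1 x0) * D) (at x0)"
    by (rule DERIV_chain2[OF F_deriv D])
  moreover have "((\<lambda>x. F (t1 x)) has_real_derivative - 1) (at x0)"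
  proof (rule DERIV_cong_ev[THEN iffD1, OF refl _ refl])
    show "\<forall>\<^sub>F x in nhds x0. - x = F (t1 x)"
      using eventually_nhds_in_open[OF I_open assms] by eventually_elim (simp add: F_t1)
  qed (rule DERIV_minus[OF DERIV_ident])
  ultimately have eq: "exp (A (t1 x0)) * b (t1 x0) * D = - 1"
    by (rule DERIV_unique)
  have "D < 0"
  proof (rule ccontr)
    assume "\<not> D < 0"
    with b_t1_pos[OF assms] have "exp (A (t1 x0)) * b (t1 x0) * D \<ge> 0"
      by simp
    with eq show False
      by simp
  qed
  with D show ?thesis
    by blast
qed

lemma t2_deriv_pos:
  assumes "x0 \<in> I"
  shows "\<exists>D. (t2 has_real_derivative D) (at x0) \<and> D > 0"
proof -
  obtain D1 where D1: "(t1 has_real_derivative D1) (at x0)" "D1 < 0"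
    using t1_deriv_neg[OF assms] by blast
  obtain D where D: "(t2 has_real_derivative D) (at x0)"
    using t2_real_holomorphic[OF assms] by (rule real_holomorphic_at_differentiable)
  have "((\<lambda>x. G (t2 x)) has_real_derivative exp (- A (t2 x0)) * b (t2 x0) * D) (at x0)"
    by (rule DERIV_chain2[OF G_deriv D])
  moreover have "((\<lambda>x. G (t2 x)) has_real_derivative exp (- A (t1 x0)) * b (t1 x0) * D1) (at x0)"
  proof (rule DERIV_cong_ev[THEN iffD1, OF refl _ refl])
    show "\<forall>\<^sub>F x in nhds x0. G (t1 x) = G (t2 x)"
      using eventually_nhds_in_open[OF I_open assms] by eventually_elim (simp add: G_t2)
  qed (rule DERIV_chain2[OF G_deriv D1(1)])
  ultimately have eq: "exp (- A (t2 x0)) * b (t2 x0) * D = exp (- A (t1 x0)) * b (t1 x0) * D1"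
    by (rule DERIV_unique)
  have "D > 0"
  proof (rule ccontr)
    assume "\<not> D > 0"
    with b_t2_neg[OF assms] have "exp (- A (t2 x0)) * b (t2 x0) * D \<ge> 0"
      by (intro mult_nonpos_nonpos) (simp_all add: mult_pos_neg less_imp_le)
    moreover have "exp (- A (t1 x0)) * b (t1 x0) * D1 < 0"
      using b_t1_pos[OF assms] D1(2) by (simp add: mult_pos_neg)
    ultimately show False
      using eq by simp
  qed
  with D show ?thesis
    by blast
qed

lemma t2_strict_mono: "strict_mono_on I t2"
proof (rule strict_mono_onI)
  fix x y assume xy: "x \<in> I" "y \<in> I" "x < y"
  show "t2 x < t2 y"
  proof (rule DERIV_pos_imp_increasing[OF \<open>x < y\<close>])
    fix t assume "x \<le> t" "t \<le> y"
    with xy I_interval have "t \<in> I"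
      unfolding is_interval_1 by blast
    then show "\<exists>D. (t2 has_real_derivative D) (at t) \<and> D > 0"
      by (rule t2_deriv_pos)
  qed
qed

lemma inj_on_t1: "inj_on t1 I"
  by (rule inj_onI) (metis F_t1 minus_equation_iff)

lemma inj_on_t2: "inj_on t2 I"
  using t2_strict_mono by (rule strict_mono_on_imp_inj_on)

lemma A_shift: "A (t + 2 * pi) = A t + A (2 * pi)"
proof -
  have "((\<lambda>t. A (t + 2 * pi) - A t) has_real_derivative 0) (at t)" for t
    using DERIV_diff[OF DERIV_shift[where z = "2 * pi", THEN iffD1, OF A_deriv] A_deriv, of t]
    by (simp add: a_periodic)
  then have "A (t + 2 * pi) - A t = A (0 + 2 * pi) - A 0"
    by (intro DERIV_isconst_all[where f = "\<lambda>t. A (t + 2 * pi) - A t"]) blast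
  then show ?thesis
    by (simp add: A_0)
qed

lemma F_shift: "F (t + 2 * pi) = F (2 * pi) + exp (A (2 * pi)) * F t"
proof -
  have "((\<lambda>t. F (t + 2 * pi) - exp (A (2 * pi)) * F t) has_real_derivative 0) (at t)" for t
  proof -
    have "((\<lambda>t. F (t + 2 * pi) - exp (A (2 * pi)) * F t) has_real_derivative
        exp (A (t + 2 * pi)) * b (t + 2 * pi) - exp (A (2 * pi)) * (exp (A t) * b t)) (at t)"
      using DERIV_shift[where z = "2 * pi", THEN iffD1, OF F_deriv] F_deriv
      by (intro DERIV_diff DERIV_cmult)
    then show ?thesis
      by (simp add: A_shift b_periodic exp_add)
  qed
  then have "F (t + 2 * pi) - exp (A (2 * pi)) * F t = F (0 + 2 * pi) - exp (A (2 * pi)) * F 0"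
    by (intro DERIV_isconst_all[where f = "\<lambda>t. F (t + 2 * pi) - exp (A (2 * pi)) * F t"]) blast
  then show ?thesis
    by (simp add: F_0)
qed

lemma periodic_iff_return: "(\<forall>t. u (t + 2 * pi) x = u t x) \<longleftrightarrow> u (2 * pi) x = x"
proof
  assume "\<forall>t. u (t + 2 * pi) x = u t x"
  then show "u (2 * pi) x = x"
    using u_init[of x] by (metis add_0)
next
  assume return: "u (2 * pi) x = x"
  obtain M where M: "\<And>t. \<bar>a t\<bar> \<le> M"
    using a_bounded by blast
  \<comment> \<open>By periodicity of a and b, u (s + 2 pi) x is another solution; it agrees with u s x at
    s = 0, and the equation is Lipschitz in x.\<close>
  define w where "w s = u (s + 2 * pi) x - u s x" for s
  have "((\<lambda>s. u (s + 2 * pi) x) has_real_derivative a s * \<bar>u (s + 2 * pi) x\<bar> + b s) (at s)" for s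
    using DERIV_shift[where z = "2 * pi", THEN iffD1, OF u_ode[where t = "s + 2 * pi"]]
    by (simp add: a_periodic b_periodic)
  from DERIV_diff[OF this u_ode]
  have "(w has_real_derivative a s * (\<bar>u (s + 2 * pi) x\<bar> - \<bar>u s x\<bar>)) (at s)" for s
    unfolding w_def by (simp add: algebra_simps)
  moreover have "\<bar>a s * (\<bar>u (s + 2 * pi) x\<bar> - \<bar>u s x\<bar>)\<bar> \<le> M * \<bar>w s\<bar>" for s
    unfolding abs_mult w_def using M[of s]
    by (intro mult_mono abs_triangle_ineq3) auto
  moreover have "w 0 = 0"
    using return u_init[of x] by (simp add: w_def)
  ultimately have "w t = 0" for t
    by (rule gronwall_zero)
  then show "\<forall>t. u (t + 2 * pi) x = u t x"
    by (simp add: w_def)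
qed

lemma analytic_zero_times:
  "real_analytic_on t1 I \<and> real_analytic_on t2 I \<and> inj_on t1 I \<and> inj_on t2 I \<and>
   real_analytic_on (inv_into I t1) (t1 ` I) \<and> real_analytic_on (inv_into I t2) (t2 ` I)"
proof (intro conjI inj_on_t1 inj_on_t2)
  show "real_analytic_on t1 I" "real_analytic_on t2 I"
    by (auto intro: real_analytic_on_if_real_holomorphic_at t1_real_holomorphic t2_real_holomorphic)
  have "\<exists>D. (t1 has_real_derivative D) (at x) \<and> D \<noteq> 0"
    and "\<exists>D. (t2 has_real_derivative D) (at x) \<and> D \<noteq> 0" if "x \<in> I" for x
    using t1_deriv_neg[OF that] t2_deriv_pos[OF that] by force+
  then show "real_analytic_on (inv_into I t1) (t1 ` I)" "real_analytic_on (inv_into I t2) (t2 ` I)"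
    using I_open inj_on_t1 inj_on_t2 t1_real_holomorphic t2_real_holomorphic
    by (auto intro!: real_analytic_on_if_real_holomorphic_at real_holomorphic_at_inv_into)
qed

lemma zero_times_signs:
  "\<forall>x\<in>I. b (t1 x) > 0 \<and> (\<exists>d. (t1 has_real_derivative d) (at x) \<and> d < 0) \<and>
          b (t2 x) < 0 \<and> (\<exists>d. (t2 has_real_derivative d) (at x) \<and> d > 0)"
  using b_t1_pos t1_deriv_neg b_t2_neg t2_deriv_pos by blast

lemma weighted_integral_t1_t2:
  "\<forall>x\<in>I. integral {t1 x..t2 x} (\<lambda>t. b t * exp (integral {t..t2 x} a)) = 0"
proof
  fix x assume x: "x \<in> I"
  have "integral {t1 x..t2 x} (\<lambda>t. b t * exp (integral {t..t2 x} a)) =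
      exp (A (t2 x)) * (G (t2 x) - G (t1 x))"
    using less_imp_le[OF zero_times(2)[OF x]]
    by (rule integral_exp_integral_weight[OF A_deriv G_deriv])
  then show "integral {t1 x..t2 x} (\<lambda>t. b t * exp (integral {t..t2 x} a)) = 0"
    by (simp add: G_t2[OF x])
qed

lemma periodic_iff_weighted_integral:
  "\<forall>x\<in>I. (\<forall>t. u (t + 2 * pi) x = u t x) \<longleftrightarrow>
     integral {t2 x..t1 x + 2 * pi} (\<lambda>t. b t * exp (integral {t..t1 x + 2 * pi} (\<lambda>s. - a s))) = 0"
proof
  fix x assume x: "x \<in> I"
  have F': "(F has_real_derivative exp (- (- A t)) * b t) (at t)" for t
    using F_deriv by simp
  have "integral {t2 x..t1 x + 2 * pi} (\<lambda>t. b t * exp (integral {t..t1 x + 2 * pi} (\<lambda>s. - a s))) =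
      exp (- A (t1 x + 2 * pi)) * (F (t1 x + 2 * pi) - F (t2 x))"
    using zero_times[OF x]
    by (intro integral_exp_integral_weight[OF DERIV_minus[OF A_deriv] F']) simp
  also have "\<dots> = exp (- A (t1 x + 2 * pi)) * (exp (A (2 * pi)) * (u (2 * pi) x - x))"
  proof -
    have "F (t1 x + 2 * pi) = F (2 * pi) - exp (A (2 * pi)) * x"
      using F_shift[of "t1 x"] F_t1[OF x] by simp
    moreover have "F (t2 x) = F (2 * pi) - exp (A (2 * pi)) * u (2 * pi) x"
      using F_t2[OF x] by simp
    ultimately show ?thesis
      by (simp add: right_diff_distrib)
  qed
  finally show "(\<forall>t. u (t + 2 * pi) x = u t x) \<longleftrightarrow>
     integral {t2 x..t1 x + 2 * pi} (\<lambda>t. b t * exp (integral {t..t1 x + 2 * pi} (\<lambda>s. - a s))) = 0"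
    by (simp add: periodic_iff_return)
qed

end

theorem proposition3p4:
  fixes a b :: "real \<Rightarrow> real"
    and u :: "real \<Rightarrow> real \<Rightarrow> real"
    and I :: "real set"
    and t1 t2 :: "real \<Rightarrow> real"
  assumes a_trig: "trig_poly a"
    and b_trig: "trig_poly b"
    and b_simple: "\<And>t. b t = 0 \<Longrightarrow> deriv b t \<noteq> 0"
    and u_ode: "\<And>t x. ((\<lambda>s. u s x) has_real_derivative (a t * \<bar>u t x\<bar> + b t)) (at t)"
    and u_init: "\<And>x. u 0 x = x"
    and I_open: "open I" and I_interval: "is_interval I" and I_ne: "I \<noteq> {}"
    and I_neg: "I \<subseteq> {..<0}"
    and zeros: "\<And>x. x \<in> I \<Longrightarrow> 0 < t1 x \<and> t1 x < t2 x \<and> t2 x < 2 * pi \<and>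
                 {t \<in> {0<..<2 * pi}. u t x = 0} = {t1 x, t2 x}"
    and simple: "\<And>x t. x \<in> I \<Longrightarrow> t \<in> {0<..<2 * pi} \<Longrightarrow> u t x = 0 \<Longrightarrow>
                 deriv (\<lambda>s. u s x) t \<noteq> 0"
  shows "(real_analytic_on t1 I \<and> real_analytic_on t2 I \<and>
         inj_on t1 I \<and> inj_on t2 I \<and>
         real_analytic_on (inv_into I t1) (t1 ` I) \<and>
         real_analytic_on (inv_into I t2) (t2 ` I))
     \<and> (\<forall>x\<in>I. b (t1 x) > 0 \<and> (\<exists>d. (t1 has_real_derivative d) (at x) \<and> d < 0) \<and>
                b (t2 x) < 0 \<and> (\<exists>d. (t2 has_real_derivative d) (at x) \<and> d > 0))
     \<and> (\<forall>x\<in>I. integral {t1 x..t2 x}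
                 (\<lambda>t. b t * exp (integral {t..t2 x} a)) = 0)
     \<and> (\<forall>x\<in>I. (\<forall>t. u (t + 2 * pi) x = u t x) \<longleftrightarrow>
                 integral {t2 x..t1 x + 2 * pi}
                   (\<lambda>t. b t * exp (integral {t..t1 x + 2 * pi} (\<lambda>s. - a s))) = 0)"
proof -
  have a: "has_entire_extension a" and b: "has_entire_extension b"
    using a_trig b_trig by (simp_all add: trig_poly_has_entire_extension)
  obtain A where A: "has_entire_extension A" "A 0 = 0" "\<And>t. (A has_real_derivative a t) (at t)"
    using has_entire_extension_primitive[OF a] by blast
  obtain F where F: "has_entire_extension F" "F 0 = 0"
    "\<And>t. (F has_real_derivative exp (A t) * b t) (at t)"
    using has_entire_extension_primitive[OF has_entire_extension_exp_mult[OF A(1) b]] by blast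
  obtain G where G: "has_entire_extension G" "\<And>t. (G has_real_derivative exp (- A t) * b t) (at t)"
    using has_entire_extension_primitive[OF has_entire_extension_exp_mult[OF
        has_entire_extension_uminus[OF A(1)] b]] by blast
  interpret abs_ode_two_zeros a b u I t1 t2 A F G
  proof
    show "a (t + 2 * pi) = a t" "b (t + 2 * pi) = b t" for t
      using a_trig b_trig by (simp_all add: trig_poly_periodic)
    show "\<exists>M. \<forall>t. \<bar>a t\<bar> \<le> M"
      using a_trig by (rule trig_poly_bounded)
    show "isCont b t" for t
      using b by (rule has_entire_extension_isCont)
  qed (fact u_ode u_init I_open I_interval I_neg zeros simple A F G)+
  show ?thesis
    using analytic_zero_times zero_times_signs weighted_integral_t1_t2
      periodic_iff_weighted_integral
    by blast
qed

end
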